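(* Let $n,m\in\mathbb{N}$. If $X\subseteq\mathbb{N}$ is finite, $(\omega^{n+m}+1)$-large and $\min X\ge3$, then there exists $Y\subseteq X$ such that $Y$ is $\omega^n$-large and $\omega^m$-sparse. In particular, if $X$ is finite, $(\omega^{n+3}+1)$-large and $\min X\ge 3$, then there exists $Y\subseteq X$ which is $\omega^n$-large and exp-sparse.
   Context: Ordinals below $\omega^\omega$ are in Cantor normal form; $\omega^j\cdot m$ = sum of $m$ copies of $\omega^j$. For $m\in\mathbb{N}$: $0[m]=0$, $(\beta+1)[m]=\beta$, $(\beta+\omega^{n})[m]=\beta+\omega^{n-1}\cdot m$ for $n\ge1$. A finite $X=\{x_0<\dots<x_{\ell-1}\}\subseteq\mathbb{N}$ is $\alpha$-large if $\alpha[x_0]\cdots[x_{\ell-1}]=0$. A set $X$ is $\alpha$-sparse if for all $x<y$ in $X$ the interval $(x,y]=\{z\in\mathbb{N}:x<z\le y\}$ is $\alpha$-large. A set $X$ with $\min X\ge3$ is exp-sparse if for all $x<y$ in $X$, $4^x<y$. *)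

theory Defs
  imports Main
begin

text \<open>Ordinals below omega^omega in Cantor normal form
  omega^e1 + ... + omega^ek (e1 >= ... >= ek), represented by the list
  [e1, ..., ek] of exponents in non-increasing order; [] is 0.\<close>

type_synonym cnf = "nat list"

definition cnf_wf :: "cnf \<Rightarrow> bool" where
  "cnf_wf a \<longleftrightarrow> sorted_wrt (\<ge>) a"

definition om :: "nat \<Rightarrow> cnf" where
  "om j = [j]"

definition succ_cnf :: "cnf \<Rightarrow> cnf" where
  "succ_cnf a = a @ [0]"

text \<open>Fundamental sequence: 0[m] = 0, (b+1)[m] = b,
  (b + omega^n)[m] = b + omega^(n-1) * m for n >= 1.\<close>
definition fund :: "cnf \<Rightarrow> nat \<Rightarrow> cnf" where
  "fund a m = (if a = [] then []
     else if last a = 0 then butlast a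
     else butlast a @ replicate m (last a - 1))"

definition large :: "cnf \<Rightarrow> nat set \<Rightarrow> bool" where
  "large a X \<longleftrightarrow> foldl fund a (sorted_list_of_set X) = []"

definition sparse :: "cnf \<Rightarrow> nat set \<Rightarrow> bool" where
  "sparse a X \<longleftrightarrow> (\<forall>x\<in>X. \<forall>y\<in>X. x < y \<longrightarrow> large a {x<..y})"

definition exp_sparse :: "nat set \<Rightarrow> bool" where
  "exp_sparse X \<longleftrightarrow> (\<forall>x\<in>X. 3 \<le> x) \<and> (\<forall>x\<in>X. \<forall>y\<in>X. x < y \<longrightarrow> 4 ^ x < y)"

end

theory Submission
  imports Defs "HOL-Library.Multiset_Order"
begin

text \<open>A set is (\<omega>^(n+m) + 1)-large iff it is (\<omega>^m \<cdot> \<omega>^n)-large after removing its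
  minimum y. While \<omega>^m \<cdot> \<alpha> is processed along the set, each use of a final term \<omega>^m
  consumes a block of elements forming an \<omega>^m-large set; keeping only the last element of
  each block yields a subset whose gaps are \<omega>^m-large and which, together with y, is
  \<alpha>-large. On the way \<omega>^(m+e+1)[z] = \<omega>^(m+e) \<cdot> z is replaced by the smaller
  \<omega>^(m+e) \<cdot> y + \<omega>^m for y < z; this is sound because largeness of sorted lists survives
  lowering exponents, deleting terms and adding smaller elements in front. For m = 3, an
  \<omega>^3-large interval (x, y] already forces y > 4^x.\<close>

definition large_list :: "cnf \<Rightarrow> nat list \<Rightarrow> bool" where
  "large_list a xs \<longleftrightarrow> foldl fund a xs = []"

lemma large_iff_large_list: "large a X \<longleftrightarrow> large_list a (sorted_list_of_set X)"
  by (simp add: large_def large_list_def)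

lemma large_set_iff_large_list:
  "sorted_wrt (<) xs \<Longrightarrow> large a (set xs) \<longleftrightarrow> large_list a xs"
  by (simp add: large_iff_large_list sorted_list_of_set_sort_remdups distinct_remdups_id
      sorted_sort_id strict_sorted_iff)

lemma large_greaterThanAtMost_iff: "large a {x<..y} \<longleftrightarrow> large_list a [Suc x..<Suc y]"
proof -
  have "{x<..y} = {Suc x..<Suc y}" by auto
  then show ?thesis by (simp add: large_iff_large_list)
qed

lemma fund_Nil [simp]: "fund [] x = []"
  by (simp add: fund_def)

lemma fund_snoc_0 [simp]: "fund (b @ [0]) x = b"
  by (simp add: fund_def)

lemma fund_snoc_Suc [simp]: "fund (b @ [Suc e]) x = b @ replicate x e"
  by (simp add: fund_def)

lemma fund_single_0 [simp]: "fund [0] x = []"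
  by (simp add: fund_def)

lemma fund_single_Suc [simp]: "fund [Suc e] x = replicate x e"
  by (simp add: fund_def)

lemma fund_append: "c \<noteq> [] \<Longrightarrow> fund (b @ c) x = b @ fund c x"
  by (auto simp: fund_def butlast_append)

lemma foldl_fund_Nil [simp]: "foldl fund [] xs = []"
  by (induction xs) auto

lemma large_list_Nil_cnf [simp]: "large_list [] xs"
  by (simp add: large_list_def)

lemma large_list_Nil [simp]: "large_list a [] \<longleftrightarrow> a = []"
  by (simp add: large_list_def)

lemma large_list_Cons [simp]: "large_list a (x # xs) \<longleftrightarrow> large_list (fund a x) xs"
  by (simp add: large_list_def)

lemma large_list_append: "large_list a xs \<Longrightarrow> large_list a (xs @ ys)"
  by (simp add: large_list_def)

text \<open>The list \<open>b @ c\<close> is the sum \<beta> + \<gamma>: the fundamental sequences act on \<gamma> until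
  it is exhausted after some \<open>j\<close> elements, and on \<beta> from then on.\<close>

lemma foldl_fund_sum_cases:
  "foldl fund (b @ c) ys = b @ foldl fund c ys \<or>
   (\<exists>j \<le> length ys. large_list c (take j ys) \<and> foldl fund (b @ c) ys = foldl fund b (drop j ys))"
proof (induction ys arbitrary: c)
  case Nil
  then show ?case by simp
next
  case (Cons y ys)
  show ?case
  proof (cases "c = []")
    case True
    then show ?thesis by (intro disjI2 exI[of _ 0]) auto
  next
    case False
    then have "foldl fund (b @ c) (y # ys) = foldl fund (b @ fund c y) ys"
      by (simp add: fund_append)
    with Cons.IH[of "fund c y"] show ?thesis
      by (auto intro: exI[of _ "Suc _"])
  qed
qed

lemma large_list_sum_splitD:
  assumes "large_list (b @ c) ys"
  obtains j where "large_list c (take j ys)" and "large_list b (drop j ys)"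
proof -
  from foldl_fund_sum_cases[of b c ys] show thesis
  proof
    assume "foldl fund (b @ c) ys = b @ foldl fund c ys"
    with assms have "large_list c (take (length ys) ys)" and "large_list b (drop (length ys) ys)"
      by (simp_all add: large_list_def)
    then show thesis by (rule that)
  next
    assume "\<exists>j \<le> length ys. large_list c (take j ys) \<and> foldl fund (b @ c) ys = foldl fund b (drop j ys)"
    then obtain j where "large_list c (take j ys)" and "foldl fund (b @ c) ys = foldl fund b (drop j ys)"
      by blast
    with assms show thesis by (intro that[of j]) (simp_all add: large_list_def)
  qed
qed

lemma large_list_sum_rightD:
  assumes "large_list (b @ c) ys"
  shows "large_list c ys"
proof -
  obtain j where "large_list c (take j ys)"
    using assms by (rule large_list_sum_splitD)
  then have "large_list c (take j ys @ drop j ys)" by (rule large_list_append)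
  then show ?thesis by simp
qed

text \<open>That a sorted list stays large when a smaller element is put in front is proved by
  induction on the exponents, which needs the property for all lists of smaller exponents
  at once.\<close>

definition prepend_stable :: "cnf \<Rightarrow> bool" where
  "prepend_stable a \<longleftrightarrow> (\<forall>x ys. sorted (x # ys) \<longrightarrow> large_list a ys \<longrightarrow> large_list a (x # ys))"

lemma large_list_prepend_if_stable:
  "prepend_stable b \<Longrightarrow> sorted (ws @ zs) \<Longrightarrow> large_list b zs \<Longrightarrow> large_list b (ws @ zs)"
proof (induction ws)
  case (Cons w ws)
  then have "large_list b (ws @ zs)" and "sorted (w # ws @ zs)" by simp_all
  with \<open>prepend_stable b\<close> show ?case unfolding prepend_stable_def by simp
qed simp

lemma large_list_sum_joinI_stable:
  assumes stable: "prepend_stable b" and "sorted xs"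
    and c_large: "large_list c (take k xs)" and b_large: "large_list b (drop k xs)"
  shows "large_list (b @ c) xs"
proof -
  have xs: "foldl fund (b @ c) xs = foldl fund (foldl fund (b @ c) (take k xs)) (drop k xs)"
    by (metis append_take_drop_id foldl_append)
  from foldl_fund_sum_cases[of b c "take k xs"] show ?thesis
  proof
    assume "foldl fund (b @ c) (take k xs) = b @ foldl fund c (take k xs)"
    with xs c_large b_large show ?thesis by (simp add: large_list_def)
  next
    assume "\<exists>j \<le> length (take k xs). large_list c (take j (take k xs)) \<and>
      foldl fund (b @ c) (take k xs) = foldl fund b (drop j (take k xs))"
    then obtain j where "j \<le> k"
      and j: "foldl fund (b @ c) (take k xs) = foldl fund b (drop j (take k xs))" by auto
    have "drop k xs = drop (k - j) (drop j xs)" using \<open>j \<le> k\<close> by simp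
    then have split: "drop j xs = drop j (take k xs) @ drop k xs"
      by (simp only: drop_take append_take_drop_id)
    have "sorted (drop j (take k xs) @ drop k xs)"
      unfolding split[symmetric] using \<open>sorted xs\<close> by (rule sorted_wrt_drop)
    then have "large_list b (drop j (take k xs) @ drop k xs)"
      using large_list_prepend_if_stable[OF stable _ b_large] by blast
    with xs j show ?thesis by (simp add: large_list_def)
  qed
qed

lemma prepend_stable_of_singletons: "(\<forall>p \<in> set c. prepend_stable [p]) \<Longrightarrow> prepend_stable c"
proof (induction c rule: rev_induct)
  case Nil
  then show ?case by (simp add: prepend_stable_def)
next
  case (snoc p b)
  then have "prepend_stable b" and stable_p: "prepend_stable [p]" by auto
  show ?case unfolding prepend_stable_def
  proof (intro allI impI)
    fix x ys assume sorted: "sorted (x # ys)" and "large_list (b @ [p]) ys"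
    then obtain j where "large_list [p] (take j ys)" and "large_list b (drop j ys)"
      by (blast elim: large_list_sum_splitD)
    moreover have "sorted (take (Suc j) (x # ys))"
      using sorted by (rule sorted_wrt_take)
    ultimately have "large_list [p] (take (Suc j) (x # ys))" and "large_list b (drop (Suc j) (x # ys))"
      using stable_p unfolding prepend_stable_def by auto
    with \<open>prepend_stable b\<close> sorted show "large_list (b @ [p]) (x # ys)"
      by (rule large_list_sum_joinI_stable)
  qed
qed

lemma prepend_stable_single: "prepend_stable [e]"
proof (induction e)
  case 0
  then show ?case by (simp add: prepend_stable_def)
next
  case (Suc e)
  show ?case unfolding prepend_stable_def
  proof (intro allI impI)
    fix x ys assume sorted: "sorted (x # ys)" and "large_list [Suc e] ys"
    then obtain y ys' where ys: "ys = y # ys'" and "large_list (replicate y e) ys'"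
      by (cases ys) auto
    moreover have "prepend_stable (replicate y e)"
      using Suc by (intro prepend_stable_of_singletons) auto
    moreover have "sorted (y # ys')" using sorted ys by simp
    ultimately have "large_list (replicate y e) ys"
      unfolding prepend_stable_def by blast
    moreover have "x \<le> y" using sorted ys by simp
    then have "replicate y e = replicate (y - x) e @ replicate x e"
      by (simp flip: replicate_add)
    ultimately have "large_list (replicate (y - x) e @ replicate x e) ys" by simp
    then have "large_list (replicate x e) ys" by (rule large_list_sum_rightD)
    then show "large_list [Suc e] (x # ys)" by simp
  qed
qed

lemma prepend_stable: "prepend_stable a"
  by (simp add: prepend_stable_of_singletons prepend_stable_single)

lemma large_list_Cons_sorted: "sorted (x # ys) \<Longrightarrow> large_list a ys \<Longrightarrow> large_list a (x # ys)"
  using prepend_stable unfolding prepend_stable_def by blast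

lemma large_list_sum_joinI:
  "sorted xs \<Longrightarrow> large_list c (take k xs) \<Longrightarrow> large_list b (drop k xs) \<Longrightarrow> large_list (b @ c) xs"
  by (rule large_list_sum_joinI_stable[OF prepend_stable])

definition large_implies :: "cnf \<Rightarrow> cnf \<Rightarrow> bool" where
  "large_implies c d \<longleftrightarrow> (\<forall>xs. sorted xs \<longrightarrow> large_list c xs \<longrightarrow> large_list d xs)"

lemma large_impliesD: "large_implies c d \<Longrightarrow> sorted xs \<Longrightarrow> large_list c xs \<Longrightarrow> large_list d xs"
  by (simp add: large_implies_def)

lemma large_implies_refl: "large_implies c c"
  by (simp add: large_implies_def)

lemma large_implies_trans: "large_implies c d \<Longrightarrow> large_implies d e \<Longrightarrow> large_implies c e"
  by (simp add: large_implies_def)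

lemma large_implies_Nil: "large_implies c []"
  by (simp add: large_implies_def)

lemma large_implies_append:
  assumes "large_implies b b'" and "large_implies c c'"
  shows "large_implies (b @ c) (b' @ c')"
  unfolding large_implies_def
proof (intro allI impI)
  fix xs assume "sorted xs" and "large_list (b @ c) xs"
  then obtain j where "large_list c (take j xs)" and "large_list b (drop j xs)"
    by (blast elim: large_list_sum_splitD)
  with assms \<open>sorted xs\<close> have "large_list c' (take j xs)" and "large_list b' (drop j xs)"
    by (simp_all add: large_impliesD sorted_wrt_take sorted_wrt_drop)
  with \<open>sorted xs\<close> show "large_list (b' @ c') xs"
    by (rule large_list_sum_joinI)
qed

lemma large_implies_replicate:
  "large_implies [p] [q] \<Longrightarrow> large_implies (replicate k p) (replicate k q)"
proof (induction k)
  case 0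
  then show ?case by (simp add: large_implies_refl)
next
  case (Suc k)
  then have "large_implies ([p] @ replicate k p) ([q] @ replicate k q)"
    by (intro large_implies_append)
  then show ?case by simp
qed

lemma large_implies_Suc: "large_implies [Suc p] [p]"
proof (induction p)
  case 0
  show ?case unfolding large_implies_def
  proof (intro allI impI)
    fix xs :: "nat list" assume "large_list [Suc 0] xs"
    then show "large_list [0] xs" by (cases xs) auto
  qed
next
  case (Suc p)
  show ?case unfolding large_implies_def
  proof (intro allI impI)
    fix xs :: "nat list" assume "sorted xs" and "large_list [Suc (Suc p)] xs"
    then obtain x xs' where xs: "xs = x # xs'" and "sorted xs'"
      and "large_list (replicate x (Suc p)) xs'"
      by (cases xs) auto
    then have "large_list (replicate x p) xs'"
      using large_implies_replicate[OF Suc.IH] by (blast dest: large_impliesD)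
    with xs show "large_list [Suc p] xs" by simp
  qed
qed

lemma large_implies_le: "q \<le> p \<Longrightarrow> large_implies [p] [q]"
proof (induction p rule: dec_induct)
  case base
  then show ?case by (rule large_implies_refl)
next
  case (step p)
  then show ?case using large_implies_Suc large_implies_trans by blast
qed

lemma large_implies_replicate_shorten:
  assumes "y < z" and "q \<le> p"
  shows "large_implies (b @ replicate z p) (b @ replicate y p @ [q])"
proof -
  have "replicate z p = replicate (z - Suc y) p @ replicate y p @ [p]"
    using \<open>y < z\<close> by (simp add: replicate_append_same flip: replicate_add replicate_Suc)
  moreover have "large_implies (replicate (z - Suc y) p @ replicate y p @ [p]) ([] @ replicate y p @ [q])"
    using \<open>q \<le> p\<close>
    by (intro large_implies_append large_implies_Nil large_implies_refl large_implies_le)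
  ultimately show ?thesis
    by (simp add: large_implies_append large_implies_refl)
qed

lemma large_list_superset:
  "sorted_wrt (<) L \<Longrightarrow> sorted_wrt (<) B \<Longrightarrow> set B \<subseteq> set L \<Longrightarrow> large_list c B
    \<Longrightarrow> large_list c L"
proof (induction L arbitrary: B c)
  case Nil
  then show ?case by simp
next
  case (Cons l L)
  show ?case
  proof (cases B)
    case Nil
    with Cons.prems show ?thesis by simp
  next
    case (Cons b B')
    show ?thesis
    proof (cases "b = l")
      case True
      with \<open>B = b # B'\<close> Cons.prems have "large_list (fund c l) L"
        by (intro Cons.IH[of B' "fund c l"]) auto
      then show ?thesis by simp
    next
      case False
      with \<open>B = b # B'\<close> Cons.prems(1,3) have "l < b" by auto
      with \<open>B = b # B'\<close> Cons.prems have "large_list c L"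
        by (intro Cons.IH[of B c]) fastforce+
      with Cons.prems(1) show ?thesis
        by (intro large_list_Cons_sorted) (auto simp: strict_sorted_iff less_imp_le)
    qed
  qed
qed

lemma large_mono: "finite X \<Longrightarrow> Y \<subseteq> X \<Longrightarrow> large a Y \<Longrightarrow> large a X"
  unfolding large_iff_large_list
  by (rule large_list_superset) (auto simp: finite_subset)

lemma sparse_insert:
  assumes "sparse a Y" and "\<forall>v \<in> Y. y < v \<and> large a {y<..v}"
  shows "sparse a (insert y Y)"
  using assms unfolding sparse_def by fastforce

text \<open>\<open>map ((+) m) t\<close> is the ordinal product \<omega>^m \<cdot> \<alpha> of \<omega>^m with the ordinal \<alpha>
  represented by \<open>t\<close>.\<close>

lemma large_shift_snoc_imp_sparse_sublist:
  assumes sorted: "sorted_wrt (<) (y # zs)"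
    and large: "large_list (map ((+) m) t @ [m]) zs"
    and IH: "\<And>y zs. sorted_wrt (<) (y # zs) \<Longrightarrow> large_list (map ((+) m) t) zs \<Longrightarrow>
      \<exists>ys. set ys \<subseteq> set zs \<and> sorted_wrt (<) (y # ys) \<and> sparse (om m) (set (y # ys))
        \<and> large_list t (y # ys)"
  shows "\<exists>ys. set ys \<subseteq> set zs \<and> sorted_wrt (<) (y # ys) \<and> sparse (om m) (set (y # ys))
    \<and> large_list t ys"
proof -
  obtain j where block: "large_list [m] (take j zs)" and rest: "large_list (map ((+) m) t) (drop j zs)"
    using large by (rule large_list_sum_splitD)
  have "take j zs \<noteq> []"
  proof
    assume "take j zs = []"
    with block show False by simp
  qed
  then obtain B y1 where B: "take j zs = B @ [y1]" by (metis rev_exhaust)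
  define R where "R = drop j zs"
  have zs: "zs = B @ y1 # R"
    unfolding R_def by (metis B append.assoc append_Cons append_Nil append_take_drop_id)
  have "sorted_wrt (<) (y1 # R)" and "y < y1" and sorted_B: "sorted_wrt (<) (B @ [y1])"
    and B_between: "\<forall>x \<in> set (B @ [y1]). y < x \<and> x \<le> y1"
    using sorted unfolding zs by (auto simp: sorted_wrt_append)
  then obtain ys where "set ys \<subseteq> set R" and sorted_ys: "sorted_wrt (<) (y1 # ys)"
    and sparse_ys: "sparse (om m) (set (y1 # ys))" and "large_list t (y1 # ys)"
    using IH rest unfolding R_def by blast
  have "large (om m) {y<..v}" if "v \<in> set (y1 # ys)" for v
  proof (rule large_mono)
    have "y1 \<le> v" using that sorted_ys by auto
    then show "set (B @ [y1]) \<subseteq> {y<..v}" using B_between by auto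
    show "large (om m) (set (B @ [y1]))"
      unfolding large_set_iff_large_list[OF sorted_B] om_def using block B by simp
  qed simp
  moreover have "\<forall>v \<in> set (y1 # ys). y < v" using \<open>y < y1\<close> sorted_ys by auto
  ultimately have "sparse (om m) (set (y # y1 # ys))"
    using sparse_ys by (simp add: sparse_insert)
  moreover have "set (y1 # ys) \<subseteq> set zs" using \<open>set ys \<subseteq> set R\<close> zs by auto
  ultimately show ?thesis
    using \<open>y < y1\<close> sorted_ys \<open>large_list t (y1 # ys)\<close> by (intro exI[of _ "y1 # ys"]) auto
qed

lemma large_shift_imp_sparse_sublist:
  "sorted_wrt (<) (y # zs) \<Longrightarrow> large_list (map ((+) m) t) zs \<Longrightarrow>
    \<exists>ys. set ys \<subseteq> set zs \<and> sorted_wrt (<) (y # ys) \<and> sparse (om m) (set (y # ys))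
      \<and> large_list t (y # ys)"
  using wf_inv_image[OF wf_less_multiset, of mset]
proof (induction t arbitrary: y zs rule: wf_induct_rule)
  case (less t)
  have IH: "\<exists>ys. set ys \<subseteq> set zs \<and> sorted_wrt (<) (y # ys) \<and> sparse (om m) (set (y # ys))
      \<and> large_list t' (y # ys)"
    if "mset t' < mset t" "sorted_wrt (<) (y # zs)" "large_list (map ((+) m) t') zs" for t' y zs
    using that by (intro less.IH) auto
  show ?case
  proof (cases t rule: rev_exhaust)
    case Nil
    then show ?thesis by (intro exI[of _ "[]"]) (simp add: sparse_def)
  next
    case (snoc b e)
    show ?thesis
    proof (cases e)
      case 0
      have large: "large_list (map ((+) m) b @ [m]) zs" using less.prems(2) snoc 0 by simp
      have "mset b < mset t" using snoc by simp
      then obtain ys where "set ys \<subseteq> set zs" "sorted_wrt (<) (y # ys)"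
        "sparse (om m) (set (y # ys))" "large_list b ys"
        using large_shift_snoc_imp_sparse_sublist[OF less.prems(1) large IH] by blast
      with snoc 0 show ?thesis by (intro exI[of _ ys]) simp
    next
      case (Suc e')
      obtain z zs' where zs: "zs = z # zs'"
        and large_zs': "large_list (map ((+) m) b @ replicate z (m + e')) zs'"
        using less.prems(2) snoc Suc by (cases zs) auto
      have "y < z" and sorted_zs': "sorted_wrt (<) (y # zs')" using less.prems(1) zs by auto
      then have "large_list (map ((+) m) b @ replicate y (m + e') @ [m]) zs'"
        using large_zs' large_implies_replicate_shorten[of y z m "m + e'" "map ((+) m) b"]
        by (auto simp: strict_sorted_iff intro: large_impliesD)
      then have large': "large_list (map ((+) m) (b @ replicate y e') @ [m]) zs'" by simp
      have "mset (b @ replicate y e') < mset t" using snoc Suc by auto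
      then obtain ys where "set ys \<subseteq> set zs'" "sorted_wrt (<) (y # ys)"
        "sparse (om m) (set (y # ys))" "large_list (b @ replicate y e') ys"
        using large_shift_snoc_imp_sparse_sublist[OF sorted_zs' large' IH] by blast
      with snoc Suc zs show ?thesis by (intro exI[of _ ys]) auto
    qed
  qed
qed

lemma large_list_replicate_0_length: "large_list (replicate k 0) xs \<Longrightarrow> k \<le> length xs"
proof (induction xs arbitrary: k)
  case (Cons x xs)
  show ?case
  proof (cases k)
    case (Suc k')
    have "fund (replicate k' 0 @ [0]) x = replicate k' 0" by simp
    with Cons Suc show ?thesis by (simp add: replicate_append_same)
  qed simp
qed simp

lemma large_list_upt_1_bound: "large_list [1] [a..<c] \<Longrightarrow> 2 * a + 1 \<le> c"
proof -
  assume large: "large_list [1] [a..<c]"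
  then have "a < c" by (cases "a < c") auto
  then have "[a..<c] = a # [Suc a..<c]" by (simp add: upt_conv_Cons)
  with large have "large_list (replicate a 0) [Suc a..<c]" by simp
  then have "a \<le> c - Suc a" by (auto dest: large_list_replicate_0_length)
  with \<open>a < c\<close> show ?thesis by simp
qed

lemma large_list_upt_replicate_1_bound:
  "a \<le> b \<Longrightarrow> large_list (replicate k 1) [a..<b] \<Longrightarrow> 2 ^ k * (a + 1) \<le> b + 1"
proof (induction k arbitrary: a)
  case 0
  then show ?case by simp
next
  case (Suc k)
  then have "large_list (replicate k 1 @ [1]) [a..<b]" by (simp add: replicate_append_same)
  then obtain j where first: "large_list [1] (take j [a..<b])"
    and rest: "large_list (replicate k 1) (drop j [a..<b])"
    by (rule large_list_sum_splitD)
  show ?case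
  proof (cases "a + j \<le> b")
    case True
    with first have "2 * a + 1 \<le> a + j"
      using large_list_upt_1_bound[of a "a + j"] by simp
    moreover from rest True have "2 ^ k * (a + j + 1) \<le> b + 1"
      using Suc.IH[of "a + j"] by simp
    moreover have "2 ^ k * (2 * (a + 1)) \<le> 2 ^ k * (a + j + 1)"
      using \<open>2 * a + 1 \<le> a + j\<close> by (intro mult_le_mono2) simp
    ultimately have "2 ^ k * (2 * (a + 1)) \<le> b + 1" by linarith
    then show ?thesis by (simp add: mult.assoc mult.left_commute)
  next
    case False
    with first rest have "2 * a + 1 \<le> b" and "k = 0"
      using large_list_upt_1_bound[of a b] by simp_all
    then show ?thesis by simp
  qed
qed

lemma large_list_upt_2_bound: "1 \<le> a \<Longrightarrow> large_list [2] [a..<b] \<Longrightarrow> 2 ^ a < b"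
proof -
  assume "1 \<le> a" and large: "large_list [2] [a..<b]"
  then have "a < b" by (cases "a < b") auto
  then have "[a..<b] = a # [Suc a..<b]" by (simp add: upt_conv_Cons)
  with large have "large_list (replicate a 1) [Suc a..<b]" by (simp add: fund_def)
  with \<open>a < b\<close> have "2 ^ a * (a + 2) \<le> b + 1"
    using large_list_upt_replicate_1_bound[of "Suc a" b a] by simp
  moreover have "2 ^ a * 3 \<le> 2 ^ a * (a + 2)" using \<open>1 \<le> a\<close> by simp
  moreover have "(2::nat) ^ 1 \<le> 2 ^ a" using \<open>1 \<le> a\<close> by (rule power_increasing) simp
  ultimately show ?thesis by simp
qed

lemma large_om_3_interval_bound:
  assumes "1 \<le> x" and "large (om 3) {x<..y}"
  shows "4 ^ x < y"
proof -
  have large: "large_list [3] [Suc x..<Suc y]"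
    using assms(2) by (simp add: large_greaterThanAtMost_iff om_def)
  then have "x < y" by (cases "x < y") auto
  then have "[Suc x..<Suc y] = Suc x # [x + 2..<Suc y]" by (simp add: upt_conv_Cons)
  with large have "large_list (replicate (Suc x) 2) [x + 2..<Suc y]" by (simp add: fund_def)
  moreover have "replicate (Suc x) (2::nat) = replicate (x - 1) 2 @ replicate 2 2"
    using \<open>1 \<le> x\<close> by (simp flip: replicate_add)
  ultimately have "large_list (replicate (x - 1) 2 @ [2] @ [2]) [x + 2..<Suc y]"
    by (simp add: numeral_2_eq_2)
  then have "large_list ([2] @ [2]) [x + 2..<Suc y]" by (rule large_list_sum_rightD)
  then obtain j where first: "large_list [2] (take j [x + 2..<Suc y])"
    and second: "large_list [2] (drop j [x + 2..<Suc y])"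
    by (rule large_list_sum_splitD)
  from second have "large_list [2] [x + 2 + j..<Suc y]" by (simp only: drop_upt)
  then have "2 ^ (x + 2 + j) < Suc y" by (intro large_list_upt_2_bound) simp_all
  moreover have "x + 2 + j < 2 ^ (x + 2 + j)" by (rule less_exp)
  ultimately have "take j [x + 2..<Suc y] = [x + 2..<x + 2 + j]" by (intro take_upt) simp
  with first have "2 ^ (x + 2) < x + 2 + j"
    by (intro large_list_upt_2_bound) simp_all
  moreover have "2 * x < 2 ^ (x + 2)"
    using less_exp[of x] by (simp add: power_add del: less_exp)
  ultimately have "2 * x < x + 2 + j" by linarith
  then have "(2::nat) ^ (2 * x) < 2 ^ (x + 2 + j)" by (rule power_strict_increasing) simp
  then have "(4::nat) ^ x < 2 ^ (x + 2 + j)" by (simp add: power_mult)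
  with \<open>2 ^ (x + 2 + j) < Suc y\<close> show ?thesis by simp
qed

lemma exp_sparse_if_sparse_om_3:
  assumes "\<forall>x \<in> Y. 3 \<le> x" and "sparse (om 3) Y"
  shows "exp_sparse Y"
  unfolding exp_sparse_def
proof (intro conjI ballI impI)
  fix x y assume "x \<in> Y" "y \<in> Y" "x < y"
  with assms have "1 \<le> x" and "large (om 3) {x<..y}" unfolding sparse_def by auto
  then show "4 ^ x < y" by (rule large_om_3_interval_bound)
qed (use assms(1) in blast)

lemma large_succ_imp_sparse_subset:
  assumes "finite X" and large: "large (succ_cnf (om (n + m))) X"
  shows "\<exists>Y \<subseteq> X. large (om n) Y \<and> sparse (om m) Y"
proof -
  from large obtain x0 rest where xs: "sorted_list_of_set X = x0 # rest"
    by (cases "sorted_list_of_set X") (auto simp: large_iff_large_list succ_cnf_def om_def)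
  have sorted: "sorted_wrt (<) (x0 # rest)"
    by (metis xs sorted_list_of_set.strict_sorted_key_list_of_set)
  have "large_list (map ((+) m) [n]) rest"
    using large xs by (simp add: large_iff_large_list succ_cnf_def om_def fund_def add.commute)
  then obtain ys where "set ys \<subseteq> set rest" and sorted_ys: "sorted_wrt (<) (x0 # ys)"
    and "sparse (om m) (set (x0 # ys))" and large_ys: "large_list [n] (x0 # ys)"
    using large_shift_imp_sparse_sublist[OF sorted] by blast
  moreover have "large (om n) (set (x0 # ys))"
    unfolding large_set_iff_large_list[OF sorted_ys] om_def by (rule large_ys)
  moreover have "set (x0 # rest) = X" using \<open>finite X\<close> xs by (metis set_sorted_list_of_set)
  ultimately show ?thesis by (intro exI[of _ "set (x0 # ys)"]) auto
qed

theorem lemma2p1: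
  fixes n m :: nat
  shows "(\<forall>X :: nat set. finite X \<and> large (succ_cnf (om (n + m))) X \<and> (\<forall>x\<in>X. 3 \<le> x)
            \<longrightarrow> (\<exists>Y. Y \<subseteq> X \<and> large (om n) Y \<and> sparse (om m) Y))
       \<and> (\<forall>X :: nat set. finite X \<and> large (succ_cnf (om (n + 3))) X \<and> (\<forall>x\<in>X. 3 \<le> x)
            \<longrightarrow> (\<exists>Y. Y \<subseteq> X \<and> large (om n) Y \<and> exp_sparse Y))"
proof (intro conjI allI impI)
  fix X :: "nat set"
  assume "finite X \<and> large (succ_cnf (om (n + m))) X \<and> (\<forall>x\<in>X. 3 \<le> x)"
  then show "\<exists>Y. Y \<subseteq> X \<and> large (om n) Y \<and> sparse (om m) Y"
    using large_succ_imp_sparse_subset[of X n m] by simp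
next
  fix X :: "nat set"
  assume X: "finite X \<and> large (succ_cnf (om (n + 3))) X \<and> (\<forall>x\<in>X. 3 \<le> x)"
  then obtain Y where "Y \<subseteq> X" and "large (om n) Y" and "sparse (om 3) Y"
    using large_succ_imp_sparse_subset[of X n 3] by auto
  moreover from X \<open>Y \<subseteq> X\<close> have "\<forall>y \<in> Y. 3 \<le> y" by auto
  ultimately show "\<exists>Y. Y \<subseteq> X \<and> large (om n) Y \<and> exp_sparse Y"
    using exp_sparse_if_sparse_om_3 by auto
qed

end
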